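(* For every integer $n\ge2$ and every integer $k$ with $0\le k\le\lfloor n/2\rfloor$, \[ d^-_{n,k}=Y(n-k,k)=\binom{n-k}{k}+\binom{n-k-1}{k-1}. \]
   Context: For $n\ge1$ let $\Xi_n$ be the poset on $\{x_1,\dots,x_n\}$ whose cover relations are exactly: $x_2\prec x_1$, $x_3\prec x_2$, and for $3\le i\le n-1$, $x_i\prec x_{i+1}$ if $i$ is odd and $x_{i+1}\prec x_i$ if $i$ is even (so $x_1>x_2>x_3<x_4>x_5<\cdots$). A filter of a poset is an up-closed subset. $\Omega_n$ is the lattice of filters of $\Xi_n$ ordered by reverse inclusion. $d^-_{n,k}$ is the number of elements of $\Omega_n$ that are covered by exactly $k$ elements of $\Omega_n$ (the number of vertices of indegree $k$ in the Hasse diagram oriented from larger to smaller elements; equivalently the number of $k$-element antichains of $\Xi_n$). $Y(n,k)=\binom nk+\binom{n-1}{k-1}$ is the Lucas triangle, with binomials of negative lower index equal to $0$ except $\binom{-1}{-1}=1$. *)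

theory Defs
  imports Main
begin

text \<open>The poset Xi_n on elements 1..n (element i stands for x_i).
  xi_cover n i j means x_i is covered by x_j (x_i \<prec> x_j).\<close>
definition xi_cover :: "nat \<Rightarrow> nat \<Rightarrow> nat \<Rightarrow> bool" where
  "xi_cover n i j \<longleftrightarrow> i \<in> {1..n} \<and> j \<in> {1..n} \<and>
     ((i = 2 \<and> j = 1) \<or> (i = 3 \<and> j = 2) \<or>
      (\<exists>m. 3 \<le> m \<and> m \<le> n - 1 \<and>
         ((odd m \<and> i = m \<and> j = Suc m) \<or> (even m \<and> i = Suc m \<and> j = m))))"

definition xi_less :: "nat \<Rightarrow> nat \<Rightarrow> nat \<Rightarrow> bool" where
  "xi_less n i j \<longleftrightarrow> (i, j) \<in> {(a, b). xi_cover n a b}\<^sup>+"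

definition xi_filter :: "nat \<Rightarrow> nat set \<Rightarrow> bool" where
  "xi_filter n U \<longleftrightarrow> U \<subseteq> {1..n} \<and> (\<forall>x y. x \<in> U \<and> xi_less n x y \<longrightarrow> y \<in> U)"

definition Omega :: "nat \<Rightarrow> nat set set" where
  "Omega n = {U. xi_filter n U}"

definition Omega_le :: "nat set \<Rightarrow> nat set \<Rightarrow> bool" where
  "Omega_le U V \<longleftrightarrow> V \<subseteq> U"

definition Omega_less :: "nat set \<Rightarrow> nat set \<Rightarrow> bool" where
  "Omega_less U V \<longleftrightarrow> Omega_le U V \<and> U \<noteq> V"

definition Omega_covers :: "nat \<Rightarrow> nat set \<Rightarrow> nat set \<Rightarrow> bool" where
  "Omega_covers n G F \<longleftrightarrow> F \<in> Omega n \<and> G \<in> Omega n \<and> Omega_less F G \<and>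
     \<not> (\<exists>H \<in> Omega n. Omega_less F H \<and> Omega_less H G)"

definition dminus :: "nat \<Rightarrow> nat \<Rightarrow> nat" where
  "dminus n k = card {F \<in> Omega n. card {G \<in> Omega n. Omega_covers n G F} = k}"

text \<open>Binomial with integer arguments: zero for negative lower index except
  binom(-1,-1) = 1; for nonnegative lower index the usual (generalized) binomial
  a(a-1)...(a-b+1)/b!, i.e. (-1)^b binom(b-a-1,b) for negative a.\<close>
definition binom :: "int \<Rightarrow> int \<Rightarrow> int" where
  "binom a b = (if a = -1 \<and> b = -1 then 1 else if b < 0 then 0
     else if a \<ge> 0 then int (nat a choose nat b)
     else (-1) ^ nat b * int (nat (b - a - 1) choose nat b))"

definition Y :: "int \<Rightarrow> int \<Rightarrow> int" where
  "Y n k = binom n k + binom (n - 1) (k - 1)"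

end

theory Submission
  imports Defs
begin

text \<open>
  In the lattice of upsets of a finite poset ordered by reverse inclusion, the elements
  covering an upset F are exactly the sets F - {m} with m minimal in F, and F \<mapsto> min F is a
  bijection from upsets onto antichains. Hence d^-_{n,k} is the number of k-element antichains
  of Xi_n. Two elements of Xi_n are comparable iff they are neighbours in x_1, ..., x_n or are
  x_1, x_3, so these antichains are the independent k-sets of the path 1 - 2 - ... - n with the
  extra edge {1,3}. Splitting according to whether n is used gives
  a(n+2, k+1) = a(n+1, k+1) + a(n, k) for n \<ge> 2, the Pascal-type recursion that
  Y(n-k, k) satisfies, and for n \<le> 3 the only antichains are the empty set and the singletons.
\<close>

section \<open>Upsets and antichains of a well-founded strict order\<close>

locale wf_strict_order =
  fixes carrier :: "'a set" and less :: "'a \<Rightarrow> 'a \<Rightarrow> bool"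
  assumes less_trans: "less x y \<Longrightarrow> less y z \<Longrightarrow> less x z"
    and wfp_less: "wfp less"
    and less_in_carrier: "less x y \<Longrightarrow> x \<in> carrier \<and> y \<in> carrier"
begin

definition upset :: "'a set \<Rightarrow> bool" where
  "upset U \<longleftrightarrow> U \<subseteq> carrier \<and> (\<forall>x y. x \<in> U \<longrightarrow> less x y \<longrightarrow> y \<in> U)"

definition minimals :: "'a set \<Rightarrow> 'a set" where
  "minimals U = {x \<in> U. \<forall>y\<in>U. \<not> less y x}"

definition upclosure :: "'a set \<Rightarrow> 'a set" where
  "upclosure A = A \<union> {y. \<exists>a\<in>A. less a y}"

definition antichain :: "'a set \<Rightarrow> bool" where
  "antichain A \<longleftrightarrow> (\<forall>a\<in>A. \<forall>b\<in>A. \<not> less a b)"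

definition upper_covers :: "'a set \<Rightarrow> 'a set set" where
  "upper_covers F = {G. upset G \<and> G \<subset> F \<and> \<not> (\<exists>H. upset H \<and> G \<subset> H \<and> H \<subset> F)}"

lemma minimal_below:
  assumes "x \<in> X"
  obtains m where "m \<in> minimals X" "m = x \<or> less m x"
proof -
  let ?Q = "{y \<in> X. y = x \<or> less y x}"
  obtain m where m: "m \<in> ?Q" and below: "\<And>y. less y m \<Longrightarrow> y \<notin> ?Q"
    using wfp_less[unfolded wfp_eq_minimal, rule_format, of x ?Q] assms by blast
  have "m \<in> minimals X"
    unfolding minimals_def using m below less_trans by blast
  with m that show thesis by blast
qed

lemma upclosure_minimals:
  assumes "upset F"
  shows "upclosure (minimals F) = F"
proof
  show "upclosure (minimals F) \<subseteq> F"
    using assms unfolding upclosure_def minimals_def upset_def by blast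
  show "F \<subseteq> upclosure (minimals F)"
  proof
    fix x assume "x \<in> F"
    then obtain m where "m \<in> minimals F" "m = x \<or> less m x" by (rule minimal_below)
    then show "x \<in> upclosure (minimals F)" unfolding upclosure_def by blast
  qed
qed

lemma minimals_upclosure:
  assumes "antichain A"
  shows "minimals (upclosure A) = A"
proof
  show "minimals (upclosure A) \<subseteq> A"
    unfolding minimals_def upclosure_def by blast
  show "A \<subseteq> minimals (upclosure A)"
    using assms less_trans unfolding minimals_def upclosure_def antichain_def by blast
qed

lemma upset_upclosure:
  assumes "A \<subseteq> carrier"
  shows "upset (upclosure A)"
  using assms less_trans less_in_carrier unfolding upset_def upclosure_def by blast

lemma bij_betw_minimals:
  "bij_betw minimals {F. upset F} {A. A \<subseteq> carrier \<and> antichain A}"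
proof (rule bij_betw_byWitness[where f' = upclosure])
  show "\<forall>F\<in>{F. upset F}. upclosure (minimals F) = F"
    using upclosure_minimals by blast
  show "\<forall>A\<in>{A. A \<subseteq> carrier \<and> antichain A}. minimals (upclosure A) = A"
    using minimals_upclosure by blast
  show "minimals ` {F. upset F} \<subseteq> {A. A \<subseteq> carrier \<and> antichain A}"
    unfolding minimals_def upset_def antichain_def by blast
  show "upclosure ` {A. A \<subseteq> carrier \<and> antichain A} \<subseteq> {F. upset F}"
    using upset_upclosure by blast
qed

lemma upset_Diff_minimal:
  assumes "upset F" "m \<in> minimals F"
  shows "upset (F - {m})"
  using assms unfolding upset_def minimals_def by blast

lemma upper_covers_eq:
  assumes F: "upset F"
  shows "upper_covers F = (\<lambda>m. F - {m}) ` minimals F"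
proof (intro equalityI subsetI)
  fix G assume "G \<in> upper_covers F"
  then have G: "upset G" "G \<subset> F" and maximal: "\<And>H. upset H \<Longrightarrow> G \<subset> H \<Longrightarrow> \<not> H \<subset> F"
    unfolding upper_covers_def by blast+
  obtain x where "x \<in> F - G" using G(2) by blast
  then obtain m where m: "m \<in> minimals (F - G)" by (rule minimal_below)
  have "m \<in> minimals F"
    using m G unfolding minimals_def upset_def by blast
  moreover from this have "G = F - {m}"
    using maximal[OF upset_Diff_minimal[OF F]] m G(2) unfolding minimals_def by blast
  ultimately show "G \<in> (\<lambda>m. F - {m}) ` minimals F" by blast
next
  fix G assume "G \<in> (\<lambda>m. F - {m}) ` minimals F"
  then obtain m where m: "m \<in> minimals F" and G: "G = F - {m}" by blast
  have "m \<in> F" using m unfolding minimals_def by blast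
  then show "G \<in> upper_covers F"
    unfolding upper_covers_def G using upset_Diff_minimal[OF F m] by blast
qed

lemma card_upper_covers:
  assumes "upset F"
  shows "card (upper_covers F) = card (minimals F)"
proof -
  have "inj_on (\<lambda>m. F - {m}) (minimals F)"
    unfolding minimals_def by (rule inj_onI) blast
  then show ?thesis
    unfolding upper_covers_eq[OF assms] by (rule card_image)
qed

lemma card_upsets_by_covers_eq_card_antichains:
  "card {F. upset F \<and> card (upper_covers F) = k} = card {A. A \<subseteq> carrier \<and> antichain A \<and> card A = k}"
proof -
  have "{F. upset F \<and> card (upper_covers F) = k} = {F \<in> {F. upset F}. card (minimals F) = k}"
    using card_upper_covers by auto
  also have "card \<dots> = card {A \<in> {A. A \<subseteq> carrier \<and> antichain A}. card A = k}"
  proof (rule bij_betw_same_card, rule bij_betw_subset[OF bij_betw_minimals])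
    show "minimals ` {F \<in> {F. upset F}. card (minimals F) = k} = {A \<in> {A. A \<subseteq> carrier \<and> antichain A}. card A = k}"
      unfolding bij_betw_imp_surj_on[OF bij_betw_minimals, symmetric] by blast
  qed auto
  finally show ?thesis by simp
qed

end

section \<open>The poset Xi_n\<close>

lemma xi_cover_iff:
  "xi_cover n i j \<longleftrightarrow> i \<in> {1..n} \<and> j \<in> {1..n} \<and>
     (i = 2 \<and> j = 1 \<or> i = 3 \<and> j = 2 \<or> odd i \<and> 3 \<le> i \<and> (j = Suc i \<or> 5 \<le> i \<and> Suc j = i))"
proof
  assume "xi_cover n i j"
  then show "i \<in> {1..n} \<and> j \<in> {1..n} \<and>
     (i = 2 \<and> j = 1 \<or> i = 3 \<and> j = 2 \<or> odd i \<and> 3 \<le> i \<and> (j = Suc i \<or> 5 \<le> i \<and> Suc j = i))"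
    unfolding xi_cover_def by (elim conjE disjE exE) (simp_all, presburger)
next
  assume R: "i \<in> {1..n} \<and> j \<in> {1..n} \<and>
     (i = 2 \<and> j = 1 \<or> i = 3 \<and> j = 2 \<or> odd i \<and> 3 \<le> i \<and> (j = Suc i \<or> 5 \<le> i \<and> Suc j = i))"
  then show "xi_cover n i j"
    unfolding xi_cover_def by (elim conjE disjE) (auto intro: exI[of _ i] exI[of _ j])
qed

lemma xi_less_iff:
  "xi_less n i j \<longleftrightarrow> i \<in> {1..n} \<and> j \<in> {1..n} \<and>
     (i = 2 \<and> j = 1 \<or> i = 3 \<and> (j = 1 \<or> j = 2) \<or> odd i \<and> 3 \<le> i \<and> (j = Suc i \<or> 5 \<le> i \<and> Suc j = i))"
  (is "_ \<longleftrightarrow> ?R i j")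
proof
  have trans: "?R a c" if "?R a b" "?R b c" for a b c
    using that by (elim conjE disjE) auto
  assume "xi_less n i j"
  then have "(i, j) \<in> {(a, b). xi_cover n a b}\<^sup>+" unfolding xi_less_def .
  then show "?R i j"
  proof (induction rule: trancl_induct)
    case (base y)
    then show ?case by (simp add: xi_cover_iff) blast
  next
    case (step y z)
    from step.hyps(2) have "?R y z" by (simp add: xi_cover_iff) blast
    with step.IH show ?case by (rule trans)
  qed
next
  have cover: "xi_less n a b" if "xi_cover n a b" for a b
    using that unfolding xi_less_def by auto
  assume R: "?R i j"
  show "xi_less n i j"
  proof (cases "i = 3 \<and> j = 1")
    case True
    with R have "xi_less n 3 2" "xi_less n 2 1" by (simp_all add: cover xi_cover_iff)
    with True show ?thesis unfolding xi_less_def by (metis trancl_trans)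
  next
    case False
    with R show ?thesis by (intro cover) (simp add: xi_cover_iff, blast)
  qed
qed

interpretation Xi: wf_strict_order "{1..n}" "xi_less n"
proof
  show "xi_less n x z" if "xi_less n x y" "xi_less n y z" for x y z
    using that unfolding xi_less_def by (rule trancl_trans)
  show "wfp (xi_less n)"
    by (rule wfp_if_convertible_to_nat[of _ "\<lambda>i. if i = 1 then 2 else if i = 2 then 1 else if odd i then 0 else 1::nat"])
      (auto simp: xi_less_iff)
  show "x \<in> {1..n} \<and> y \<in> {1..n}" if "xi_less n x y" for x y
    using that by (simp add: xi_less_iff)
qed

lemma xi_less_cases:
  assumes "xi_less n i j"
  shows "j = Suc i \<or> i = Suc j \<or> i = 3 \<and> j = 1"
  using assms unfolding xi_less_iff by auto

lemma xi_comparable_Suc: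
  assumes "1 \<le> i" "Suc i \<le> n"
  shows "xi_less n i (Suc i) \<or> xi_less n (Suc i) i"
proof (cases "i \<le> 2")
  case True
  with assms show ?thesis by (auto simp: xi_less_iff le_Suc_eq)
next
  case False
  with assms show ?thesis by (cases "odd i") (simp_all add: xi_less_iff, presburger)
qed

definition xi_independent :: "nat \<Rightarrow> nat set \<Rightarrow> bool" where
  "xi_independent n A \<longleftrightarrow> A \<subseteq> {1..n} \<and> (\<forall>i\<in>A. Suc i \<notin> A) \<and> \<not> (1 \<in> A \<and> 3 \<in> A)"

lemma xi_antichain_iff:
  "A \<subseteq> {1..n} \<and> Xi.antichain n A \<longleftrightarrow> xi_independent n A"
proof
  assume A: "A \<subseteq> {1..n} \<and> Xi.antichain n A"
  have "xi_less n 3 1" if "1 \<in> A" "3 \<in> A"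
    using that A by (auto simp: xi_less_iff)
  moreover have "xi_less n i (Suc i) \<or> xi_less n (Suc i) i" if "i \<in> A" "Suc i \<in> A" for i
    using that A by (intro xi_comparable_Suc) auto
  ultimately show "xi_independent n A"
    using A unfolding xi_independent_def Xi.antichain_def by blast
next
  assume "xi_independent n A"
  then show "A \<subseteq> {1..n} \<and> Xi.antichain n A"
    unfolding xi_independent_def Xi.antichain_def by (metis xi_less_cases)
qed

lemma dminus_eq_card_xi_independent:
  "dminus n k = card {A. xi_independent n A \<and> card A = k}"
proof -
  have Omega_eq: "Omega n = {U. Xi.upset n U}"
    unfolding Omega_def xi_filter_def Xi.upset_def by blast
  have covers: "{G \<in> Omega n. Omega_covers n G F} = Xi.upper_covers n F" if "F \<in> Omega n" for F
    using that unfolding Omega_eq Omega_covers_def Omega_less_def Omega_le_def Xi.upper_covers_def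
    by blast
  have "dminus n k = card {F. Xi.upset n F \<and> card (Xi.upper_covers n F) = k}"
    unfolding dminus_def using covers by (intro arg_cong[where f = card]) (auto simp: Omega_eq)
  also have "\<dots> = card {A. xi_independent n A \<and> card A = k}"
    unfolding Xi.card_upsets_by_covers_eq_card_antichains xi_antichain_iff[symmetric] by (simp add: conj_assoc)
  finally show ?thesis .
qed

section \<open>Counting the antichains of Xi_n\<close>

lemma finite_xi_independent: "xi_independent n A \<Longrightarrow> finite A"
  unfolding xi_independent_def using finite_subset by blast

lemma xi_independent_le_3:
  assumes "n \<le> 3"
  shows "xi_independent n A \<longleftrightarrow> A \<subseteq> {1..n} \<and> card A \<le> 1"
proof
  assume A: "xi_independent n A"
  have "a = b" if "a \<in> A" "b \<in> A" for a b
  proof -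
    have "a \<in> {1, 2, 3}" "b \<in> {1, 2, 3}"
      using A that assms unfolding xi_independent_def by auto
    then show "a = b"
      using A that unfolding xi_independent_def by (auto simp: eval_nat_numeral)
  qed
  then show "A \<subseteq> {1..n} \<and> card A \<le> 1"
    using A finite_xi_independent[OF A] unfolding xi_independent_def by (simp add: card_le_Suc0_iff_eq)
next
  assume A: "A \<subseteq> {1..n} \<and> card A \<le> 1"
  then have "a = b" if "a \<in> A" "b \<in> A" for a b
    using that finite_subset[of A "{1..n}"] by (auto simp: card_le_Suc0_iff_eq)
  moreover have "(1::nat) \<noteq> 3" by simp
  ultimately show "xi_independent n A"
    using A n_not_Suc_n unfolding xi_independent_def by metis
qed

lemma card_xi_independent_le_3:
  assumes "n \<le> 3"
  shows "card {A. xi_independent n A \<and> card A = k} = (if k \<le> 1 then n choose k else 0)"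
proof -
  have "{A. xi_independent n A \<and> card A = k} = (if k \<le> 1 then {A. A \<subseteq> {1..n} \<and> card A = k} else {})"
    by (auto simp: xi_independent_le_3[OF assms])
  then show ?thesis by (simp add: n_subsets)
qed

text \<open>The hypothesis 2 \<le> n keeps the edge {1,3} away from the deleted vertices n + 1, n + 2.\<close>

lemma xi_independent_Suc_Suc_split:
  assumes "2 \<le> n"
  shows "{A. xi_independent (Suc (Suc n)) A \<and> card A = Suc k} =
    {A. xi_independent (Suc n) A \<and> card A = Suc k} \<union>
    insert (Suc (Suc n)) ` {B. xi_independent n B \<and> card B = k}"
    (is "?L = ?R1 \<union> ?R2")
proof (intro equalityI subsetI)
  fix A assume "A \<in> ?L"
  then have A: "xi_independent (Suc (Suc n)) A" "card A = Suc k" by auto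
  show "A \<in> ?R1 \<union> ?R2"
  proof (cases "Suc (Suc n) \<in> A")
    case True
    let ?B = "A - {Suc (Suc n)}"
    have "Suc n \<notin> A" using A True unfolding xi_independent_def by blast
    then have "xi_independent n ?B" using A unfolding xi_independent_def by (auto simp: le_Suc_eq)
    moreover have "card ?B = k" using A True finite_xi_independent by simp
    moreover have "A = insert (Suc (Suc n)) ?B" using True by blast
    ultimately show ?thesis by blast
  next
    case False
    then have "xi_independent (Suc n) A" using A unfolding xi_independent_def by (auto simp: le_Suc_eq)
    then show ?thesis using A by blast
  qed
next
  fix A assume "A \<in> ?R1 \<union> ?R2"
  then show "A \<in> ?L"
  proof
    assume "A \<in> ?R1"
    then show ?thesis unfolding xi_independent_def by auto
  next
    assume "A \<in> ?R2"
    then obtain B where B: "xi_independent n B" "card B = k" "A = insert (Suc (Suc n)) B" by blast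
    have "Suc (Suc n) \<notin> B" using B unfolding xi_independent_def by auto
    then have "card A = Suc k" using B finite_xi_independent by simp
    moreover have "xi_independent (Suc (Suc n)) A" using B assms unfolding xi_independent_def by auto
    ultimately show ?thesis by blast
  qed
qed

lemma card_xi_independent_Suc_Suc:
  assumes "2 \<le> n"
  shows "card {A. xi_independent (Suc (Suc n)) A \<and> card A = Suc k} =
    card {A. xi_independent (Suc n) A \<and> card A = Suc k} + card {B. xi_independent n B \<and> card B = k}"
proof -
  have finite: "finite {A. xi_independent m A \<and> P A}" for m P
    by (rule finite_subset[of _ "Pow {1..m}"]) (auto simp: xi_independent_def)
  have "Suc (Suc n) \<notin> B" if "xi_independent n B" for B
    using that unfolding xi_independent_def by auto
  then have "inj_on (insert (Suc (Suc n))) {B. xi_independent n B \<and> card B = k}"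
    by (intro inj_onI) (simp add: insert_ident)
  moreover have "{A. xi_independent (Suc n) A \<and> card A = Suc k} \<inter>
      insert (Suc (Suc n)) ` {B. xi_independent n B \<and> card B = k} = {}"
    unfolding xi_independent_def by auto
  ultimately show ?thesis
    unfolding xi_independent_Suc_Suc_split[OF assms]
    by (simp add: card_Un_disjoint finite card_image)
qed

text \<open>
  Y (n - k) k over nat. The case k = 0 is separate: truncated subtraction would turn
  binom (n - 1) (-1) = 0 into (n - 1 choose 0) = 1.
\<close>

fun Y_diag :: "nat \<Rightarrow> nat \<Rightarrow> nat" where
  "Y_diag n 0 = 1"
| "Y_diag n (Suc j) = (n - Suc j choose Suc j) + (n - Suc (Suc j) choose j)"

lemma Y_diag_Suc_Suc:
  assumes "2 \<le> n"
  shows "Y_diag (Suc (Suc n)) (Suc j) = Y_diag (Suc n) (Suc j) + Y_diag n j"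
proof (cases j)
  case 0
  with assms show ?thesis by simp
next
  case (Suc i)
  show ?thesis
  proof (cases "i + 2 \<le> n")
    case True
    then obtain m where "n = Suc (Suc (i + m))"
      by (auto dest: le_Suc_ex)
    then show ?thesis using Suc by simp
  next
    case False
    with assms Suc show ?thesis by (simp add: binomial_eq_0)
  qed
qed

lemma Y_diag_le_3:
  assumes "1 \<le> n" "n \<le> 3"
  shows "Y_diag n k = (if k \<le> 1 then n choose k else 0)"
proof (cases k)
  case (Suc j)
  with assms show ?thesis by (cases j) (simp_all add: binomial_eq_0)
qed simp

lemma card_xi_independent_0: "card {A. xi_independent n A \<and> card A = 0} = 1"
proof -
  have "{A. xi_independent n A \<and> card A = 0} = {{}}"
    using finite_xi_independent by (auto simp: xi_independent_def)
  then show ?thesis by simp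
qed

lemma card_xi_independent:
  assumes "2 \<le> n"
  shows "card {A. xi_independent n A \<and> card A = k} = Y_diag n k"
  using assms
proof (induction n arbitrary: k rule: less_induct)
  case (less n)
  show ?case
  proof (cases "n \<le> 3")
    case True
    with less.prems show ?thesis
      by (simp add: card_xi_independent_le_3 Y_diag_le_3)
  next
    case False
    define m where "m = n - 2"
    have m: "n = Suc (Suc m)" "2 \<le> m"
      using False unfolding m_def by simp_all
    show ?thesis
    proof (cases k)
      case 0
      then show ?thesis by (simp add: card_xi_independent_0)
    next
      case (Suc j)
      have "card {A. xi_independent (Suc (Suc m)) A \<and> card A = Suc j} =
          card {A. xi_independent (Suc m) A \<and> card A = Suc j} + card {A. xi_independent m A \<and> card A = j}"
        by (rule card_xi_independent_Suc_Suc[OF m(2)])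
      also have "\<dots> = Y_diag (Suc m) (Suc j) + Y_diag m j"
        using less.IH m by simp
      also have "\<dots> = Y_diag (Suc (Suc m)) (Suc j)"
        by (rule Y_diag_Suc_Suc[OF m(2), symmetric])
      finally show ?thesis
        using Suc m(1) by simp
    qed
  qed
qed

lemma binom_of_nat: "binom (int a) (int b) = int (a choose b)"
  by (simp add: binom_def)

lemma int_Y_diag:
  assumes "1 \<le> n" "k \<le> n div 2"
  shows "int (Y_diag n k) = Y (int n - int k) (int k)"
proof (cases k)
  case 0
  with assms show ?thesis by (simp add: Y_def binom_def)
next
  case (Suc j)
  with assms have "int n - int k = int (n - Suc j)" "int n - int k - 1 = int (n - Suc (Suc j))"
    "int k - 1 = int j"
    by auto
  then show ?thesis
    unfolding Y_def Suc by (simp only: binom_of_nat) simp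
qed

theorem mainTheorem19:
  fixes n k :: nat
  assumes "n \<ge> 2" and "k \<le> n div 2"
  shows "int (dminus n k) = Y (int n - int k) (int k)
       \<and> Y (int n - int k) (int k) = binom (int n - int k) (int k) + binom (int n - int k - 1) (int k - 1)"
proof
  have "dminus n k = Y_diag n k"
    using dminus_eq_card_xi_independent card_xi_independent[OF assms(1)] by simp
  then show "int (dminus n k) = Y (int n - int k) (int k)"
    using int_Y_diag assms by simp
qed (simp add: Y_def)

end
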